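(* Let $G$ be a countably infinite graph for which there exists a finite set $S\subseteq V(G)$ such that $G-S$ has no finite dominating set. Then for every $r\in\mathbb{N}$ and every $r$-coloring of the edges of $K_\mathbb{N}$, there is a monochromatic copy of $G$ whose vertex set has positive upper density (i.e. $G$ is $r$-Ramsey-dense).
   Context: $K_{\mathbb{N}}$ is the complete graph on $\mathbb{N}=\{1,2,\dots\}$. A copy of $G$ is a subgraph of $K_\mathbb{N}$ isomorphic to $G$; monochromatic means all its edges have the same color. Upper density of $V\subseteq\mathbb{N}$: $\overline{d}(V)=\limsup_{t\to\infty}|V\cap\{1,\dots,t\}|/t$. A set $X\subseteq V(G)$ is dominating if every vertex of $V(G)\setminus X$ has a neighbor in $X$. *)

theory Defs
  imports "HOL-Analysis.Analysis" "HOL-Library.Liminf_Limsup"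
begin

definition simple_graph :: "'a set \<Rightarrow> ('a \<Rightarrow> 'a \<Rightarrow> bool) \<Rightarrow> bool" where
  "simple_graph V E \<longleftrightarrow> (\<forall>u v. E u v \<longrightarrow> u \<in> V \<and> v \<in> V \<and> u \<noteq> v \<and> E v u)"

definition dominating :: "'a set \<Rightarrow> ('a \<Rightarrow> 'a \<Rightarrow> bool) \<Rightarrow> 'a set \<Rightarrow> bool" where
  "dominating W E X \<longleftrightarrow> X \<subseteq> W \<and> (\<forall>v \<in> W - X. \<exists>u \<in> X. E v u)"

definition upper_density :: "nat set \<Rightarrow> ereal" where
  "upper_density A = limsup (\<lambda>t. ereal (real (card (A \<inter> {1..t})) / real t))"

definition edge_coloring :: "nat \<Rightarrow> (nat set \<Rightarrow> nat) \<Rightarrow> bool" where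
  "edge_coloring r c \<longleftrightarrow> (\<forall>x y. 1 \<le> x \<longrightarrow> 1 \<le> y \<longrightarrow> x \<noteq> y \<longrightarrow> c {x, y} < r)"

definition mono_copy :: "'a set \<Rightarrow> ('a \<Rightarrow> 'a \<Rightarrow> bool) \<Rightarrow> (nat set \<Rightarrow> nat) \<Rightarrow> ('a \<Rightarrow> nat) \<Rightarrow> bool" where
  "mono_copy V E c f \<longleftrightarrow> inj_on f V \<and> f ` V \<subseteq> {1..} \<and>
     (\<exists>i. \<forall>u v. E u v \<longrightarrow> c {f u, f v} = i)"

end

theory Submission
  imports Defs
begin

text \<open>Extend the ideal of sets of upper density zero to a prime ideal \<open>I\<close> (Zorn's lemma). Sets
  outside \<open>I\<close> have positive upper density and are closed under finite intersections, and a finite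
  union lies outside \<open>I\<close> only if one of its parts does. By this pigeonhole principle there are a
  colour \<open>i\<close> and a set \<open>C \<notin> I\<close> of positive integers whose colour-\<open>i\<close> neighbourhoods all lie
  outside \<open>I\<close>. Embed \<open>G\<close> into \<open>C\<close> by a back-and-forth construction, starting with \<open>S\<close>. Going
  forth, the next vertex of an enumeration of \<open>V\<close> is sent to a common colour-\<open>i\<close> neighbour of all
  images so far. Going back, the next point \<open>b\<close> of \<open>C\<close> that is a colour-\<open>i\<close> neighbour of all images
  of \<open>S\<close> becomes the image of a new vertex whose placed neighbours all lie in \<open>S\<close>; such a vertex
  exists because \<open>G - S\<close> has no finite dominating set. The image of the limit embedding contains
  all such \<open>b\<close>, a set outside \<open>I\<close>, so it has positive upper density.\<close>

section \<open>Upper density\<close>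

lemma upper_density_nonneg: "0 \<le> upper_density A"
proof -
  have "limsup (\<lambda>t. 0 :: ereal) \<le> upper_density A"
    unfolding upper_density_def by (intro Limsup_mono always_eventually allI) simp
  then show ?thesis by (simp add: Limsup_const)
qed

lemma upper_density_mono:
  assumes "A \<subseteq> B" shows "upper_density A \<le> upper_density B"
proof -
  have "card (A \<inter> {1..t}) \<le> card (B \<inter> {1..t})" for t
    using assms by (intro card_mono) auto
  then show ?thesis
    unfolding upper_density_def
    by (intro Limsup_mono always_eventually allI) (simp add: divide_right_mono)
qed

lemma upper_density_Un: "upper_density (A \<union> B) \<le> upper_density A + upper_density B"
proof -
  have "card ((A \<union> B) \<inter> {1..t}) \<le> card (A \<inter> {1..t}) + card (B \<inter> {1..t})" for t
    by (metis Int_Un_distrib2 card_Un_le)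
  then have "upper_density (A \<union> B) \<le>
      limsup (\<lambda>t. ereal (card (A \<inter> {1..t}) / real t) + ereal (card (B \<inter> {1..t}) / real t))"
    unfolding upper_density_def
    by (intro Limsup_mono always_eventually allI)
       (simp add: divide_right_mono flip: add_divide_distrib of_nat_add)
  also have "\<dots> \<le> upper_density A + upper_density B"
    unfolding upper_density_def by (rule ereal_limsup_add_mono)
  finally show ?thesis .
qed

lemma upper_density_finite:
  assumes "finite A" shows "upper_density A = 0"
proof -
  have "upper_density A \<le> limsup (\<lambda>t. ereal (card A / real t))"
    unfolding upper_density_def using assms
    by (intro Limsup_mono always_eventually allI)
       (simp add: divide_right_mono card_mono)
  also have "\<dots> = 0"
  proof (rule lim_imp_Limsup)
    have "(\<lambda>t. card A / real t) \<longlonglongrightarrow> 0"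
      by real_asymp
    then show "(\<lambda>t. ereal (card A / real t)) \<longlonglongrightarrow> 0"
      by (simp add: zero_ereal_def tendsto_ereal)
  qed simp
  finally show ?thesis
    using upper_density_nonneg[of A] by simp
qed

lemma upper_density_UNIV: "upper_density UNIV = 1"
proof -
  have "eventually (\<lambda>t. ereal (card (UNIV \<inter> {1..t}) / real t) = 1) sequentially"
    by (rule eventually_sequentiallyI[of 1]) simp
  then have "upper_density UNIV = limsup (\<lambda>t. 1)"
    unfolding upper_density_def by (rule Limsup_eq)
  then show ?thesis by (simp add: Limsup_const)
qed

section \<open>Prime ideals of sets\<close>

definition proper_ideal :: "'a set set \<Rightarrow> bool" where
  "proper_ideal I \<longleftrightarrow>
     {} \<in> I \<and> UNIV \<notin> I \<and> (\<forall>A\<in>I. \<forall>B\<subseteq>A. B \<in> I) \<and> (\<forall>A\<in>I. \<forall>B\<in>I. A \<union> B \<in> I)"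

lemma proper_idealI:
  assumes "{} \<in> I" "UNIV \<notin> I" "\<And>A B. A \<in> I \<Longrightarrow> B \<subseteq> A \<Longrightarrow> B \<in> I"
    "\<And>A B. A \<in> I \<Longrightarrow> B \<in> I \<Longrightarrow> A \<union> B \<in> I"
  shows "proper_ideal I"
  using assms unfolding proper_ideal_def by blast

lemma
  assumes "proper_ideal I"
  shows proper_ideal_empty: "{} \<in> I"
    and proper_ideal_UNIV: "UNIV \<notin> I"
    and proper_ideal_subset: "A \<in> I \<Longrightarrow> B \<subseteq> A \<Longrightarrow> B \<in> I"
    and proper_ideal_Un: "A \<in> I \<Longrightarrow> B \<in> I \<Longrightarrow> A \<union> B \<in> I"
  using assms unfolding proper_ideal_def by blast+

lemma proper_ideal_UN:
  assumes "proper_ideal I" "finite J" "\<And>j. j \<in> J \<Longrightarrow> B j \<in> I"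
  shows "(\<Union>j\<in>J. B j) \<in> I"
  using assms(2,3)
  by (induction J rule: finite_induct)
     (simp_all add: proper_ideal_empty[OF assms(1)] proper_ideal_Un[OF assms(1)])

lemma proper_ideal_upper_density_zero: "proper_ideal {A. upper_density A = 0}"
proof (rule proper_idealI)
  show "B \<in> {A. upper_density A = 0}" if "A \<in> {A. upper_density A = 0}" "B \<subseteq> A" for A B
    using upper_density_mono[OF that(2)] upper_density_nonneg[of B] that(1) by simp
  show "A \<union> B \<in> {A. upper_density A = 0}"
    if "A \<in> {A. upper_density A = 0}" "B \<in> {A. upper_density A = 0}" for A B
    using upper_density_Un[of A B] upper_density_nonneg[of "A \<union> B"] that by simp
qed (simp_all add: upper_density_finite upper_density_UNIV)

lemma proper_ideal_Union_chain:
  assumes "\<C> \<noteq> {}" "\<And>J. J \<in> \<C> \<Longrightarrow> proper_ideal J"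
    and "\<And>J K. J \<in> \<C> \<Longrightarrow> K \<in> \<C> \<Longrightarrow> J \<subseteq> K \<or> K \<subseteq> J"
  shows "proper_ideal (\<Union>\<C>)"
proof (rule proper_idealI)
  show "{} \<in> \<Union>\<C>" using assms(1,2) proper_ideal_empty by blast
  show "UNIV \<notin> \<Union>\<C>" using assms(2) proper_ideal_UNIV by blast
next
  fix A B assume "A \<in> \<Union>\<C>" "B \<subseteq> A"
  then show "B \<in> \<Union>\<C>" using assms(2) proper_ideal_subset by blast
next
  fix A B assume "A \<in> \<Union>\<C>" "B \<in> \<Union>\<C>"
  then obtain J K where "J \<in> \<C>" "K \<in> \<C>" "A \<in> J" "B \<in> K" by blast
  with assms(3) obtain L where "L \<in> \<C>" "A \<in> L" "B \<in> L" by blast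
  then show "A \<union> B \<in> \<Union>\<C>" using assms(2) proper_ideal_Un by blast
qed

lemma proper_ideal_adjoin:
  assumes "proper_ideal I" "- A \<notin> I"
  shows "proper_ideal {B. \<exists>X\<in>I. B \<subseteq> X \<union> A}"
proof (rule proper_idealI)
  show "{} \<in> {B. \<exists>X\<in>I. B \<subseteq> X \<union> A}"
    using proper_ideal_empty[OF assms(1)] by blast
  show "UNIV \<notin> {B. \<exists>X\<in>I. B \<subseteq> X \<union> A}"
  proof
    assume "UNIV \<in> {B. \<exists>X\<in>I. B \<subseteq> X \<union> A}"
    then obtain X where "X \<in> I" "- A \<subseteq> X" by blast
    then show False using assms proper_ideal_subset by blast
  qed
next
  fix B C assume "B \<in> {B. \<exists>X\<in>I. B \<subseteq> X \<union> A}"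
  then obtain X where X: "X \<in> I" "B \<subseteq> X \<union> A" by blast
  show "C \<in> {B. \<exists>X\<in>I. B \<subseteq> X \<union> A}" if "C \<subseteq> B"
    using X that by blast
  show "B \<union> C \<in> {B. \<exists>X\<in>I. B \<subseteq> X \<union> A}" if "C \<in> {B. \<exists>X\<in>I. B \<subseteq> X \<union> A}"
  proof -
    from that obtain Y where "Y \<in> I" "C \<subseteq> Y \<union> A" by blast
    moreover have "X \<union> Y \<in> I" using proper_ideal_Un[OF assms(1) X(1) \<open>Y \<in> I\<close>] .
    moreover have "B \<union> C \<subseteq> (X \<union> Y) \<union> A" using X(2) \<open>C \<subseteq> Y \<union> A\<close> by blast
    ultimately show ?thesis by blast
  qed
qed

theorem proper_ideal_extend_prime:
  assumes "proper_ideal Z"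
  obtains I where "Z \<subseteq> I" "proper_ideal I" "\<And>A. A \<in> I \<or> - A \<in> I"
proof -
  let ?\<F> = "{I. Z \<subseteq> I \<and> proper_ideal I}"
  have "\<exists>M\<in>?\<F>. \<forall>X\<in>?\<F>. M \<subseteq> X \<longrightarrow> X = M"
  proof (rule subset_Zorn)
    fix \<C> assume "subset.chain ?\<F> \<C>"
    then have \<C>: "\<C> \<subseteq> ?\<F>" "\<And>J K. J \<in> \<C> \<Longrightarrow> K \<in> \<C> \<Longrightarrow> J \<subseteq> K \<or> K \<subseteq> J"
      by (auto simp: subset_chain_def)
    show "\<exists>U\<in>?\<F>. \<forall>X\<in>\<C>. X \<subseteq> U"
    proof (cases "\<C> = {}")
      case True
      then show ?thesis using assms by blast
    next
      case False
      then have "\<Union>\<C> \<in> ?\<F>" using \<C> proper_ideal_Union_chain[of \<C>] by blast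
      then show ?thesis by blast
    qed
  qed
  then obtain M where "M \<in> ?\<F>" and max: "\<And>X. X \<in> ?\<F> \<Longrightarrow> M \<subseteq> X \<Longrightarrow> X = M"
    by auto
  then have M: "Z \<subseteq> M" "proper_ideal M" by simp_all
  have "A \<in> M \<or> - A \<in> M" for A
  proof (rule disjCI)
    assume "- A \<notin> M"
    let ?M' = "{B. \<exists>X\<in>M. B \<subseteq> X \<union> A}"
    have "M \<subseteq> ?M'" "A \<in> ?M'" using proper_ideal_empty[OF M(2)] by blast+
    moreover have "proper_ideal ?M'" using M(2) \<open>- A \<notin> M\<close> by (rule proper_ideal_adjoin)
    moreover have "Z \<subseteq> ?M'" using M(1) \<open>M \<subseteq> ?M'\<close> by (rule order_trans)
    ultimately have "?M' = M" using max by simp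
    with \<open>A \<in> ?M'\<close> show "A \<in> M" by simp
  qed
  with M show thesis using that by simp
qed

locale prime_ideal =
  fixes I :: "'a set set"
  assumes proper: "proper_ideal I" and prime: "A \<in> I \<or> - A \<in> I"
begin

lemma notin_iff_Compl_in: "A \<notin> I \<longleftrightarrow> - A \<in> I"
  using prime proper_ideal_Un[OF proper, of A "- A"] proper_ideal_UNIV[OF proper] by auto

lemma notin_mono: "A \<notin> I \<Longrightarrow> A \<subseteq> B \<Longrightarrow> B \<notin> I"
  using proper_ideal_subset[OF proper] by blast

lemma Diff_notin: "A \<notin> I \<Longrightarrow> B \<in> I \<Longrightarrow> A - B \<notin> I"
proof -
  assume "A \<notin> I" "B \<in> I"
  have "A \<subseteq> (A - B) \<union> B" by blast
  then show "A - B \<notin> I"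
    using proper_ideal_Un[OF proper, of "A - B" B] notin_mono[OF \<open>A \<notin> I\<close>] \<open>B \<in> I\<close> by blast
qed

lemma Int_notin: "A \<notin> I \<Longrightarrow> B \<notin> I \<Longrightarrow> A \<inter> B \<notin> I"
  using proper_ideal_Un[OF proper, of "- A" "- B"] by (simp add: notin_iff_Compl_in)

lemma INT_notin: "finite F \<Longrightarrow> (\<And>x. x \<in> F \<Longrightarrow> A x \<notin> I) \<Longrightarrow> (\<Inter>x\<in>F. A x) \<notin> I"
  by (induction F rule: finite_induct)
     (simp_all add: Int_notin proper_ideal_UNIV[OF proper])

lemma fibre_notin:
  assumes "A \<notin> I" "f ` A \<subseteq> J" "finite J"
  obtains j where "j \<in> J" "{x \<in> A. f x = j} \<notin> I"
proof -
  have "A = (\<Union>j\<in>J. {x \<in> A. f x = j})" using assms(2) by blast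
  show thesis
  proof (rule ccontr)
    assume "\<not> thesis"
    then have "(\<Union>j\<in>J. {x \<in> A. f x = j}) \<in> I"
      using that by (intro proper_ideal_UN[OF proper assms(3)]) blast
    with assms(1) \<open>A = _\<close> show False by simp
  qed
qed

end

locale free_prime_ideal = prime_ideal +
  assumes finite_in: "finite A \<Longrightarrow> A \<in> I"

lemma ex_colour_class:
  fixes I :: "nat set set"
  assumes "free_prime_ideal I" "edge_coloring r c"
  obtains i C where "C \<subseteq> {1..}" "C \<notin> I" "\<And>x. x \<in> C \<Longrightarrow> {y. c {x, y} = i} \<notin> I"
proof -
  interpret free_prime_ideal I by fact
  have positive: "{1..} \<notin> I"
  proof -
    have "- {1..} = {0::nat}" by auto
    then show ?thesis using notin_iff_Compl_in finite_in[of "{0}"] by simp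
  qed
  have ex_colour: "\<exists>j. j < r \<and> {y. c {x, y} = j} \<notin> I" if "1 \<le> x" for x
  proof -
    have "{1..} - {x} \<notin> I" using Diff_notin[OF positive finite_in] by simp
    moreover have "(\<lambda>y. c {x, y}) ` ({1..} - {x}) \<subseteq> {..<r}"
      using assms(2) that unfolding edge_coloring_def by auto
    ultimately obtain j where "j \<in> {..<r}" "{y \<in> {1..} - {x}. c {x, y} = j} \<notin> I"
      by (rule fibre_notin) simp
    moreover have "{y \<in> {1..} - {x}. c {x, y} = j} \<subseteq> {y. c {x, y} = j}" by blast
    ultimately show ?thesis using notin_mono by auto
  qed
  define colour where "colour x = (SOME j. j < r \<and> {y. c {x, y} = j} \<notin> I)" for x
  have colour: "colour x < r" "{y. c {x, y} = colour x} \<notin> I" if "1 \<le> x" for x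
    using someI_ex[OF ex_colour[OF that]] unfolding colour_def by auto
  have "colour ` {1..} \<subseteq> {..<r}" using colour(1) by auto
  with positive obtain i where "{x \<in> {1..}. colour x = i} \<notin> I"
    by (rule fibre_notin) simp
  moreover have "{y. c {x, y} = i} \<notin> I" if "x \<in> {x \<in> {1..}. colour x = i}" for x
    using colour(2) that by auto
  ultimately show thesis by (intro that[of "{x \<in> {1..}. colour x = i}" i]) auto
qed

section \<open>Limits of increasing chains of finite maps\<close>

lemma map_le_upd_notin_dom: "v \<notin> dom m \<Longrightarrow> m \<subseteq>\<^sub>m m(v \<mapsto> p)"
  by (auto simp: map_le_def)

lemma ran_map_le: "m \<subseteq>\<^sub>m m' \<Longrightarrow> ran m \<subseteq> ran m'"
  by (auto simp: map_le_def ran_def dom_def) (metis option.distinct(1))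

text \<open>If \<open>x\<close> lies in no \<open>dom (m n)\<close>, the \<open>LEAST\<close> is junk, but then \<open>chain_limit m x = None\<close>
  as it should be.\<close>
definition chain_limit :: "(nat \<Rightarrow> 'a \<rightharpoonup> 'b) \<Rightarrow> 'a \<rightharpoonup> 'b" where
  "chain_limit m x = m (LEAST n. x \<in> dom (m n)) x"

lemma map_le_chain_mono:
  assumes "\<And>n. m n \<subseteq>\<^sub>m m (Suc n)" "n \<le> k"
  shows "m n \<subseteq>\<^sub>m m k"
  using assms(2) by (induction rule: dec_induct) (auto intro: map_le_trans assms(1))

lemma map_le_chain_limit:
  assumes "\<And>n. m n \<subseteq>\<^sub>m m (Suc n)"
  shows "m n \<subseteq>\<^sub>m chain_limit m"
  unfolding map_le_def
proof
  fix x assume "x \<in> dom (m n)"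
  let ?k = "LEAST k. x \<in> dom (m k)"
  have "x \<in> dom (m ?k)" "?k \<le> n"
    using \<open>x \<in> dom (m n)\<close> by (rule LeastI, rule Least_le)
  then show "m n x = chain_limit m x"
    using map_le_chain_mono[where m = m, OF assms \<open>?k \<le> n\<close>]
    by (simp add: chain_limit_def map_le_def)
qed

lemma dom_chain_limit: "dom (chain_limit m) = (\<Union>n. dom (m n))"
proof
  show "dom (chain_limit m) \<subseteq> (\<Union>n. dom (m n))"
    unfolding chain_limit_def by blast
  show "(\<Union>n. dom (m n)) \<subseteq> dom (chain_limit m)"
  proof
    fix x assume "x \<in> (\<Union>n. dom (m n))"
    then obtain n where "x \<in> dom (m n)" by blast
    then have "x \<in> dom (m (LEAST k. x \<in> dom (m k)))" by (rule LeastI)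
    then show "x \<in> dom (chain_limit m)" by (simp add: chain_limit_def dom_def)
  qed
qed

lemma chain_limit_common_stage:
  assumes "\<And>n. m n \<subseteq>\<^sub>m m (Suc n)" "x \<in> dom (chain_limit m)" "y \<in> dom (chain_limit m)"
  obtains n where "m n x = chain_limit m x" "m n y = chain_limit m y"
proof -
  obtain k l where "x \<in> dom (m k)" "y \<in> dom (m l)"
    using assms(2,3) by (auto simp: dom_chain_limit)
  then have "x \<in> dom (m (max k l))" "y \<in> dom (m (max k l))"
    using map_le_implies_dom_le[OF map_le_chain_mono[where m = m, OF assms(1)]]
    by (meson max.cobounded1 max.cobounded2 subsetD)+
  then show thesis
    using that map_le_chain_limit[where m = m, OF assms(1)] by (auto simp: map_le_def)
qed

section \<open>The back-and-forth embedding\<close>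

locale dense_copy = free_prime_ideal I for I :: "nat set set" +
  fixes V :: "'a set" and E :: "'a \<Rightarrow> 'a \<Rightarrow> bool" and S :: "'a set"
    and c :: "nat set \<Rightarrow> nat" and i :: nat and C :: "nat set"
  assumes graph: "simple_graph V E" and countable: "countable V"
    and finite_S: "finite S" and S_subset: "S \<subseteq> V"
    and no_finite_dominating: "\<And>X. finite X \<Longrightarrow> \<not> dominating (V - S) E X"
    and C_notin: "C \<notin> I" and nbhd_notin: "\<And>x. x \<in> C \<Longrightarrow> {y. c {x, y} = i} \<notin> I"
begin

lemma edge_sym: "E u v \<Longrightarrow> E v u"
  and edge_in_V: "E u v \<Longrightarrow> u \<in> V"
  and edge_irrefl: "E u v \<Longrightarrow> u \<noteq> v"
  using graph unfolding simple_graph_def by blast+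

lemma infinite_V_minus_S: "infinite (V - S)"
  using no_finite_dominating[of "V - S"] unfolding dominating_def by blast

lemma ex_free_vertex:
  assumes "finite D"
  obtains w where "w \<in> V - S - D" "\<And>u. u \<in> D - S \<Longrightarrow> \<not> E w u"
proof -
  let ?X = "(D - S) \<inter> V"
  have "\<not> dominating (V - S) E ?X" using assms by (intro no_finite_dominating) simp
  then obtain w where w: "w \<in> V - S - ?X" "\<And>u. u \<in> ?X \<Longrightarrow> \<not> E w u"
    unfolding dominating_def by blast
  moreover have "\<not> E w u" if "u \<in> D - S" for u
    using w(2)[of u] edge_in_V[OF edge_sym] that by blast
  ultimately show thesis using that by blast
qed

definition coloured_map :: "('a \<rightharpoonup> nat) \<Rightarrow> bool" where
  "coloured_map m \<longleftrightarrow> dom m \<subseteq> V \<and> inj_on m (dom m) \<and> ran m \<subseteq> C \<and>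
     (\<forall>u v a b. E u v \<longrightarrow> m u = Some a \<longrightarrow> m v = Some b \<longrightarrow> c {a, b} = i)"

lemma coloured_map_upd:
  assumes m: "coloured_map m" and v: "v \<in> V" "v \<notin> dom m" and p: "p \<in> C" "p \<notin> ran m"
    and nbrs: "\<And>u a. E v u \<Longrightarrow> m u = Some a \<Longrightarrow> c {a, p} = i"
  shows "coloured_map (m(v \<mapsto> p))"
proof -
  have "inj_on (m(v \<mapsto> p)) (insert v (dom m))"
    using m p(2) v(2) unfolding coloured_map_def inj_on_def ran_def by auto
  moreover have "c {a, b} = i"
    if "E x y" "(m(v \<mapsto> p)) x = Some a" "(m(v \<mapsto> p)) y = Some b" for x y a b
  proof -
    have "x \<noteq> y" using edge_irrefl[OF that(1)] .
    consider "x = v" | "y = v" | "x \<noteq> v" "y \<noteq> v" by blast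
    then show ?thesis
    proof cases
      case 1
      then have "c {b, p} = i" using nbrs that \<open>x \<noteq> y\<close> by auto
      with 1 that(2) show ?thesis by (simp add: insert_commute)
    next
      case 2
      with that(1) have "E v x" by (simp add: edge_sym)
      then show ?thesis using nbrs 2 that \<open>x \<noteq> y\<close> by auto
    qed (use m that in \<open>auto simp: coloured_map_def\<close>)
  qed
  moreover have "dom (m(v \<mapsto> p)) = insert v (dom m)" by simp
  moreover have "ran (m(v \<mapsto> p)) = insert p (ran m)" using v(2) by (simp add: domIff)
  ultimately show ?thesis
    using m v(1) p(1) unfolding coloured_map_def by auto
qed

lemma coloured_map_chain_limit:
  assumes chain: "\<And>n. m n \<subseteq>\<^sub>m m (Suc n)" and coloured: "\<And>n. coloured_map (m n)"
  shows "coloured_map (chain_limit m)"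
  unfolding coloured_map_def
proof (intro conjI allI impI)
  show "dom (chain_limit m) \<subseteq> V"
    using coloured unfolding dom_chain_limit coloured_map_def by blast
  show "inj_on (chain_limit m) (dom (chain_limit m))"
  proof (rule inj_onI)
    fix x y assume xy: "x \<in> dom (chain_limit m)" "y \<in> dom (chain_limit m)"
      and eq: "chain_limit m x = chain_limit m y"
    obtain n where n: "m n x = chain_limit m x" "m n y = chain_limit m y"
      using chain_limit_common_stage[where m = m, OF chain xy] .
    have "inj_on (m n) (dom (m n))" using coloured[of n] by (simp add: coloured_map_def)
    moreover have "x \<in> dom (m n)" "y \<in> dom (m n)" using n xy by (simp_all add: domIff)
    ultimately show "x = y" using n eq by (simp add: inj_on_def)
  qed
  show "ran (chain_limit m) \<subseteq> C"
  proof
    fix a assume "a \<in> ran (chain_limit m)"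
    then obtain x where x: "chain_limit m x = Some a" by (auto simp: ran_def)
    then have "x \<in> dom (chain_limit m)" by blast
    then obtain n where "m n x = chain_limit m x"
      using chain_limit_common_stage[where m = m, OF chain] by metis
    with x have "a \<in> ran (m n)" by (simp add: ranI)
    then show "a \<in> C" using coloured[of n] by (auto simp: coloured_map_def)
  qed
  fix u v a b assume uv: "E u v" "chain_limit m u = Some a" "chain_limit m v = Some b"
  then have "u \<in> dom (chain_limit m)" "v \<in> dom (chain_limit m)" by blast+
  then obtain n where "m n u = chain_limit m u" "m n v = chain_limit m v"
    using chain_limit_common_stage[where m = m, OF chain] by metis
  with uv coloured[of n] show "c {a, b} = i" unfolding coloured_map_def by simp
qed

lemma ex_common_nbr:
  assumes "finite A" "A \<subseteq> C"
  obtains p where "p \<in> C - A" "\<And>a. a \<in> A \<Longrightarrow> c {a, p} = i"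
proof -
  have "C \<inter> (\<Inter>a\<in>A. {y. c {a, y} = i}) \<notin> I"
    using assms nbhd_notin by (intro Int_notin C_notin INT_notin) auto
  then have "C \<inter> (\<Inter>a\<in>A. {y. c {a, y} = i}) - A \<notin> I"
    using assms(1) by (intro Diff_notin finite_in)
  then have "C \<inter> (\<Inter>a\<in>A. {y. c {a, y} = i}) - A \<noteq> {}"
    using proper_ideal_empty[OF proper] by metis
  then show thesis using that by blast
qed

lemma ex_coloured_map_on:
  assumes "finite D" "D \<subseteq> V"
  obtains m where "coloured_map m" "dom m = D"
  using assms
proof (induction D arbitrary: thesis rule: finite_induct)
  case empty
  then show ?case by (simp add: coloured_map_def)
next
  case (insert v D)
  then obtain m where m: "coloured_map m" "dom m = D" by blast
  then have "finite (ran m)" "ran m \<subseteq> C"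
    using insert.hyps(1) finite_ran by (auto simp: coloured_map_def)
  then obtain p where "p \<in> C - ran m" "\<And>a. a \<in> ran m \<Longrightarrow> c {a, p} = i"
    by (rule ex_common_nbr) auto
  then have "coloured_map (m(v \<mapsto> p))"
    using m insert by (intro coloured_map_upd) (auto intro: ranI)
  moreover have "dom (m(v \<mapsto> p)) = insert v D" using m(2) by simp
  ultimately show ?case by (rule insert.prems(1))
qed

definition initial_map :: "'a \<rightharpoonup> nat" where
  "initial_map = (SOME m. coloured_map m \<and> dom m = S)"

lemma initial_map: "coloured_map initial_map" "dom initial_map = S"
proof -
  obtain m where "coloured_map m \<and> dom m = S"
    using ex_coloured_map_on[OF finite_S S_subset] by blast
  then have "coloured_map initial_map \<and> dom initial_map = S"
    unfolding initial_map_def by (rule someI[where P = "\<lambda>m. coloured_map m \<and> dom m = S"])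
  then show "coloured_map initial_map" "dom initial_map = S" by simp_all
qed

definition targets :: "nat set" where
  "targets = {b \<in> C. \<forall>a\<in>ran initial_map. c {a, b} = i}"

lemma targets_notin: "targets \<notin> I"
proof -
  have "ran initial_map \<subseteq> C" "finite (ran initial_map)"
    using initial_map finite_S finite_ran[of initial_map] by (auto simp: coloured_map_def)
  then have "C \<inter> (\<Inter>a\<in>ran initial_map. {y. c {a, y} = i}) \<notin> I"
    using nbhd_notin by (intro Int_notin C_notin INT_notin) auto
  moreover have "C \<inter> (\<Inter>a\<in>ran initial_map. {y. c {a, y} = i}) = targets"
    unfolding targets_def by blast
  ultimately show ?thesis by simp
qed

definition admissible :: "('a \<rightharpoonup> nat) \<Rightarrow> bool" where
  "admissible m \<longleftrightarrow> coloured_map m \<and> finite (dom m) \<and> initial_map \<subseteq>\<^sub>m m"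

definition forth_step :: "'a \<Rightarrow> ('a \<rightharpoonup> nat) \<Rightarrow> 'a \<rightharpoonup> nat" where
  "forth_step v m = (if v \<in> dom m then m
     else m(v \<mapsto> (SOME p. p \<in> C - ran m \<and> (\<forall>a\<in>ran m. c {a, p} = i))))"

definition back_step :: "nat \<Rightarrow> ('a \<rightharpoonup> nat) \<Rightarrow> 'a \<rightharpoonup> nat" where
  "back_step b m = (if b \<notin> targets \<or> b \<in> ran m then m
     else m((SOME w. w \<in> V - S - dom m \<and> (\<forall>u\<in>dom m - S. \<not> E w u)) \<mapsto> b))"

lemma forth_step:
  assumes m: "admissible m" and v: "v \<in> V"
  shows "admissible (forth_step v m)" "m \<subseteq>\<^sub>m forth_step v m" "v \<in> dom (forth_step v m)"
proof -
  have m': "coloured_map m" "finite (dom m)" "initial_map \<subseteq>\<^sub>m m"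
    using m by (simp_all add: admissible_def)
  have "admissible (forth_step v m) \<and> m \<subseteq>\<^sub>m forth_step v m \<and> v \<in> dom (forth_step v m)"
  proof (cases "v \<in> dom m")
    case True
    then show ?thesis using m by (simp add: forth_step_def)
  next
    case False
    let ?p = "SOME p. p \<in> C - ran m \<and> (\<forall>a\<in>ran m. c {a, p} = i)"
    have "finite (ran m)" "ran m \<subseteq> C"
      using m' finite_ran by (auto simp: coloured_map_def)
    then obtain p where "p \<in> C - ran m \<and> (\<forall>a\<in>ran m. c {a, p} = i)"
      by (rule ex_common_nbr) auto
    then have "?p \<in> C - ran m \<and> (\<forall>a\<in>ran m. c {a, ?p} = i)" by (rule someI)
    then have p: "?p \<in> C - ran m" "\<And>a. a \<in> ran m \<Longrightarrow> c {a, ?p} = i" by simp_all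
    have "coloured_map (m(v \<mapsto> ?p))"
      using m'(1) v False p by (intro coloured_map_upd) (auto intro: ranI)
    moreover have "finite (dom (m(v \<mapsto> ?p)))" using m'(2) by simp
    moreover have "m \<subseteq>\<^sub>m m(v \<mapsto> ?p)" using False by (rule map_le_upd_notin_dom)
    moreover have "initial_map \<subseteq>\<^sub>m m(v \<mapsto> ?p)" using m'(3) calculation(3) by (rule map_le_trans)
    ultimately show ?thesis
      using False unfolding admissible_def forth_step_def by simp
  qed
  then show "admissible (forth_step v m)" "m \<subseteq>\<^sub>m forth_step v m" "v \<in> dom (forth_step v m)"
    by simp_all
qed

lemma back_step:
  assumes m: "admissible m"
  shows "admissible (back_step b m)" "m \<subseteq>\<^sub>m back_step b m"
    "b \<in> targets \<Longrightarrow> b \<in> ran (back_step b m)"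
proof -
  have m': "coloured_map m" "finite (dom m)" "initial_map \<subseteq>\<^sub>m m"
    using m by (simp_all add: admissible_def)
  have "admissible (back_step b m) \<and> m \<subseteq>\<^sub>m back_step b m \<and>
      (b \<in> targets \<longrightarrow> b \<in> ran (back_step b m))"
  proof (cases "b \<notin> targets \<or> b \<in> ran m")
    case True
    then show ?thesis using m by (auto simp: back_step_def)
  next
    case False
    let ?w = "SOME w. w \<in> V - S - dom m \<and> (\<forall>u\<in>dom m - S. \<not> E w u)"
    obtain w where "w \<in> V - S - dom m" "\<And>u. u \<in> dom m - S \<Longrightarrow> \<not> E w u"
      using m'(2) by (rule ex_free_vertex) auto
    then have "w \<in> V - S - dom m \<and> (\<forall>u\<in>dom m - S. \<not> E w u)" by simp
    then have "?w \<in> V - S - dom m \<and> (\<forall>u\<in>dom m - S. \<not> E ?w u)" by (rule someI)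
    then have w: "?w \<in> V" "?w \<notin> dom m" "\<And>u. u \<in> dom m - S \<Longrightarrow> \<not> E ?w u" by simp_all
    have b: "b \<in> C" "b \<notin> ran m" "\<And>a. a \<in> ran initial_map \<Longrightarrow> c {a, b} = i"
      using False unfolding targets_def by auto
    have "c {a, b} = i" if "E ?w u" "m u = Some a" for u a
    proof -
      have "u \<in> dom m" using that(2) by (simp add: domI)
      then have "u \<in> S" using w(3) that(1) by blast
      then have "initial_map u = Some a"
        using m'(3) that(2) initial_map(2) by (auto simp: map_le_def)
      then show ?thesis by (intro b(3) ranI)
    qed
    then have "coloured_map (m(?w \<mapsto> b))"
      using m'(1) w(1,2) b(1,2) by (intro coloured_map_upd)
    moreover have "finite (dom (m(?w \<mapsto> b)))" using m'(2) by simp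
    moreover have "m \<subseteq>\<^sub>m m(?w \<mapsto> b)" using w(2) by (rule map_le_upd_notin_dom)
    moreover have "initial_map \<subseteq>\<^sub>m m(?w \<mapsto> b)" using m'(3) calculation(3) by (rule map_le_trans)
    moreover have "b \<in> ran (m(?w \<mapsto> b))" by (rule ranI[where a = ?w]) simp
    ultimately show ?thesis
      using False unfolding admissible_def back_step_def by simp
  qed
  then show "admissible (back_step b m)" "m \<subseteq>\<^sub>m back_step b m"
    "b \<in> targets \<Longrightarrow> b \<in> ran (back_step b m)"
    by simp_all
qed

primrec stage :: "nat \<Rightarrow> 'a \<rightharpoonup> nat" where
  "stage 0 = initial_map"
| "stage (Suc n) = back_step n (forth_step (from_nat_into V n) (stage n))"

lemma V_nonempty: "V \<noteq> {}"
  using infinite_V_minus_S by auto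

lemma stage_admissible: "admissible (stage n)"
proof (induction n)
  case 0
  show ?case using initial_map finite_S by (simp add: admissible_def)
next
  case (Suc n)
  have "admissible (forth_step (from_nat_into V n) (stage n))"
    using Suc from_nat_into[OF V_nonempty] by (rule forth_step(1))
  then show ?case by (simp add: back_step(1))
qed

lemma
  shows stage_mono: "stage n \<subseteq>\<^sub>m stage (Suc n)"
    and stage_dom: "from_nat_into V n \<in> dom (stage (Suc n))"
    and stage_ran: "n \<in> targets \<Longrightarrow> n \<in> ran (stage (Suc n))"
proof -
  let ?v = "from_nat_into V n"
  have v: "?v \<in> V" using from_nat_into[OF V_nonempty] .
  have forth_facts: "admissible (forth_step ?v (stage n))"
      "stage n \<subseteq>\<^sub>m forth_step ?v (stage n)" "?v \<in> dom (forth_step ?v (stage n))"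
    using forth_step[OF stage_admissible v] by blast+
  have back_facts: "forth_step ?v (stage n) \<subseteq>\<^sub>m stage (Suc n)"
    "n \<in> targets \<Longrightarrow> n \<in> ran (stage (Suc n))"
    using back_step(2,3)[OF forth_facts(1)] by simp_all
  show "stage n \<subseteq>\<^sub>m stage (Suc n)" using forth_facts(2) back_facts(1) by (rule map_le_trans)
  show "?v \<in> dom (stage (Suc n))"
    using forth_facts(3) map_le_implies_dom_le[OF back_facts(1)] by blast
  show "n \<in> targets \<Longrightarrow> n \<in> ran (stage (Suc n))" by (rule back_facts(2))
qed

theorem ex_dense_coloured_copy:
  obtains f where "inj_on f V" "f ` V \<subseteq> C" "\<And>u v. E u v \<Longrightarrow> c {f u, f v} = i" "f ` V \<notin> I"
proof -
  let ?M = "chain_limit stage"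
  have M: "coloured_map ?M"
    using stage_admissible by (intro coloured_map_chain_limit stage_mono) (simp add: admissible_def)
  have "V \<subseteq> dom ?M"
  proof
    fix x assume "x \<in> V"
    then obtain n where "x = from_nat_into V n"
      using range_from_nat_into[OF V_nonempty countable] by (metis rangeE)
    then show "x \<in> dom ?M"
      using stage_dom map_le_implies_dom_le[OF map_le_chain_limit[where m = stage, OF stage_mono]]
      by blast
  qed
  then have dom_M: "dom ?M = V" using M by (auto simp: coloured_map_def)
  define f where "f x = the (?M x)" for x
  have M_f: "?M x = Some (f x)" if "x \<in> V" for x
  proof -
    have "x \<in> dom ?M" using dom_M that by simp
    then show ?thesis unfolding f_def by auto
  qed
  have image: "f ` V = ran ?M"
    using dom_M M_f by (force simp: ran_def)
  have "inj_on f V"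
    using M M_f dom_M unfolding coloured_map_def inj_on_def by metis
  moreover have "f ` V \<subseteq> C"
    using M image by (simp add: coloured_map_def)
  moreover have "c {f u, f v} = i" if "E u v" for u v
    using M M_f edge_in_V[OF that] edge_in_V[OF edge_sym[OF that]] that
    unfolding coloured_map_def by blast
  moreover have "targets \<subseteq> f ` V"
    using stage_ran ran_map_le[OF map_le_chain_limit[where m = stage, OF stage_mono]] image
    by blast
  then have "f ` V \<notin> I" using targets_notin notin_mono by blast
  ultimately show thesis by (rule that)
qed

end

theorem mainTheorem3:
  fixes V :: "'a set" and E :: "'a \<Rightarrow> 'a \<Rightarrow> bool"
  assumes "simple_graph V E"
    and "countable V" and "infinite V"
    and "\<exists>S. finite S \<and> S \<subseteq> V \<and> \<not> (\<exists>X. finite X \<and> dominating (V - S) E X)"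
  shows "\<forall>r::nat. \<forall>c. edge_coloring r c \<longrightarrow>
           (\<exists>f. mono_copy V E c f \<and> upper_density (f ` V) > 0)"
proof (intro allI impI)
  fix r :: nat and c assume colouring: "edge_coloring r c"
  obtain S where S: "finite S" "S \<subseteq> V" "\<And>X. finite X \<Longrightarrow> \<not> dominating (V - S) E X"
    using assms(4) by blast
  obtain I where I: "{A. upper_density A = 0} \<subseteq> I" "proper_ideal I" "\<And>A. A \<in> I \<or> - A \<in> I"
    using proper_ideal_upper_density_zero by (rule proper_ideal_extend_prime) blast
  then have free: "free_prime_ideal I"
    by unfold_locales (auto simp: upper_density_finite)
  then obtain i C where C: "C \<subseteq> {1..}" "C \<notin> I" "\<And>x. x \<in> C \<Longrightarrow> {y. c {x, y} = i} \<notin> I"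
    using colouring by (rule ex_colour_class) blast
  interpret dense_copy I V E S c i C
    using assms(1,2) S C by (intro dense_copy.intro[OF free] dense_copy_axioms.intro) auto
  obtain f where f: "inj_on f V" "f ` V \<subseteq> C" "\<And>u v. E u v \<Longrightarrow> c {f u, f v} = i" "f ` V \<notin> I"
    by (rule ex_dense_coloured_copy) blast
  have "mono_copy V E c f"
    using f(1-3) C(1) unfolding mono_copy_def by blast
  moreover have "upper_density (f ` V) \<noteq> 0" using f(4) I(1) by blast
  then have "upper_density (f ` V) > 0" using upper_density_nonneg[of "f ` V"] by simp
  ultimately show "\<exists>f. mono_copy V E c f \<and> upper_density (f ` V) > 0" by blast
qed

end
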